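(* Let $\varphi:\mathbb{R}^d\to\mathbb{R}^p$ be any feature map and $z_1,\dots,z_N\in\mathbb{R}^d$ training inputs with labels $G=(g_1,\dots,g_N)\in\mathbb{R}^N$, such that the kernel $K=\Phi\Phi^\top\in\mathbb{R}^{N\times N}$ is invertible, where $\Phi\in\mathbb{R}^{N\times p}$ has $i$-th row $\varphi(z_i)^\top$. Let $\Phi_{-1}\in\mathbb{R}^{(N-1)\times p}$ be $\Phi$ with its first row removed, $P_{\Phi_{-1}}$ the orthogonal projector onto the span of the rows of $\Phi_{-1}$, and $P^\perp_{\Phi_{-1}}=I-P_{\Phi_{-1}}$. Then $\|P^\perp_{\Phi_{-1}}\varphi(z_1)\|_2\neq 0$, and for every $z\in\mathbb{R}^d$, $$\mathcal S_{z_1}(z)=\mathcal F_\varphi(z,z_1)\,\mathcal S_{z_1}(z_1),\qquad\text{where }\ \mathcal F_\varphi(z,z_1):=\frac{\varphi(z)^\top P^\perp_{\Phi_{-1}}\varphi(z_1)}{\|P^\perp_{\Phi_{-1}}\varphi(z_1)\|_2^2}.$$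
   Context: Model: $f(z,\theta)=\varphi(z)^\top\theta$, $\theta\in\mathbb{R}^p$. Given an initialization $\theta_0\in\mathbb{R}^p$, the trained parameters are $\theta^*=\theta_0+\Phi^+(G-\Phi\theta_0)$ with $\Phi^+=\Phi^\top K^{-1}$ (the Moore–Penrose inverse). With $Z_{-1},G_{-1}$ the data and labels without the first pair, $\theta^*_{-1}=\theta_0+\Phi_{-1}^+(G_{-1}-\Phi_{-1}\theta_0)$, where $\Phi_{-1}^+=\Phi_{-1}^\top(\Phi_{-1}\Phi_{-1}^\top)^{-1}$. The stability with respect to $z_1$ is the function $\mathcal S_{z_1}(z):=f(z,\theta^* )-f(z,\theta^*_{-1})$. *)

theory Defs
  imports "Jordan_Normal_Form.Matrix"
begin

definition minv :: "real mat \<Rightarrow> real mat" where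
  "minv A = (SOME B. B \<in> carrier_mat (dim_row A) (dim_row A) \<and> inverts_mat A B \<and> inverts_mat B A)"

text \<open>Moore--Penrose inverse of a full-row-rank matrix: Phi^+ = Phi^T (Phi Phi^T)^{-1}.\<close>
definition pinv :: "real mat \<Rightarrow> real mat" where
  "pinv Phi = transpose_mat Phi * minv (Phi * transpose_mat Phi)"

definition vnorm :: "real vec \<Rightarrow> real" where
  "vnorm v = sqrt (v \<bullet> v)"

definition feat_mat :: "nat \<Rightarrow> nat \<Rightarrow> (real vec \<Rightarrow> real vec) \<Rightarrow> (nat \<Rightarrow> real vec) \<Rightarrow> real mat" where
  "feat_mat N p phi zs = mat N p (\<lambda>(i, j). phi (zs i) $ j)"

definition drop_first_row :: "real mat \<Rightarrow> real mat" where
  "drop_first_row A = mat (dim_row A - 1) (dim_col A) (\<lambda>(i, j). A $$ (i + 1, j))"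

definition drop_first :: "real vec \<Rightarrow> real vec" where
  "drop_first v = vec (dim_vec v - 1) (\<lambda>i. v $ (i + 1))"

definition row_span :: "real mat \<Rightarrow> real vec set" where
  "row_span A = {transpose_mat A *\<^sub>v c | c. c \<in> carrier_vec (dim_row A)}"

definition is_orth_projector :: "nat \<Rightarrow> real mat \<Rightarrow> real vec set \<Rightarrow> bool" where
  "is_orth_projector p P S \<longleftrightarrow> P \<in> carrier_mat p p \<and> P * P = P \<and> transpose_mat P = P
     \<and> {P *\<^sub>v v | v. v \<in> carrier_vec p} = S"

definition fmodel :: "(real vec \<Rightarrow> real vec) \<Rightarrow> real vec \<Rightarrow> real vec \<Rightarrow> real" where
  "fmodel phi z theta = phi z \<bullet> theta"

definition trained :: "real mat \<Rightarrow> real vec \<Rightarrow> real vec \<Rightarrow> real vec" where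
  "trained Phi G theta0 = theta0 + pinv Phi *\<^sub>v (G - Phi *\<^sub>v theta0)"

text \<open>Stability with respect to the first training point (index 0).\<close>
definition stability :: "nat \<Rightarrow> nat \<Rightarrow> (real vec \<Rightarrow> real vec) \<Rightarrow> (nat \<Rightarrow> real vec)
    \<Rightarrow> real vec \<Rightarrow> real vec \<Rightarrow> real vec \<Rightarrow> real" where
  "stability N p phi zs G theta0 z =
     fmodel phi z (trained (feat_mat N p phi zs) G theta0)
     - fmodel phi z (trained (drop_first_row (feat_mat N p phi zs)) (drop_first G) theta0)"

end

theory Submission
  imports Defs "Jordan_Normal_Form.Determinant"
begin

text \<open>Both trained parameter vectors interpolate the labels of \<open>z\<^sub>2, \<dots>, z\<^sub>N\<close>, so their
  difference \<open>D = \<theta>\<^sup>* - \<theta>\<^sup>*\<^sub>-\<^sub>1\<close> satisfies \<open>\<Phi>\<^sub>-\<^sub>1 D = 0\<close>, i.e. \<open>P D = 0\<close>. On the other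
  hand \<open>D = \<Phi>\<^sup>T c - \<Phi>\<^sub>-\<^sub>1\<^sup>T c'\<close> lies in \<open>s \<phi>(z\<^sub>1) + row_span \<Phi>\<^sub>-\<^sub>1\<close>, and the only vector
  of that affine space killed by \<open>P\<close> is \<open>s P\<^sup>\<bottom> \<phi>(z\<^sub>1)\<close>. Hence
  \<open>S(z) = \<phi>(z) \<bullet> D = s \<phi>(z) \<bullet> P\<^sup>\<bottom> \<phi>(z\<^sub>1)\<close> for every \<open>z\<close>, and evaluating at \<open>z\<^sub>1\<close> gives
  \<open>s = S(z\<^sub>1) / \<parallel>P\<^sup>\<bottom> \<phi>(z\<^sub>1)\<parallel>\<^sup>2\<close>. The denominator is nonzero because invertibility of
  \<open>K\<close> means the rows of \<open>\<Phi>\<close> are independent, so \<open>\<phi>(z\<^sub>1) \<notin> row_span \<Phi>\<^sub>-\<^sub>1\<close>.\<close>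

lemma scalar_prod_self_nonneg: "0 \<le> (v :: real vec) \<bullet> v"
  unfolding scalar_prod_def by (auto intro: sum_nonneg)

lemma scalar_prod_self_eq_0_iff:
  assumes "(v :: real vec) \<in> carrier_vec n"
  shows "v \<bullet> v = 0 \<longleftrightarrow> v = 0\<^sub>v n"
proof
  assume "v \<bullet> v = 0"
  then have "\<forall>i \<in> {0..<dim_vec v}. v $ i * v $ i = 0"
    unfolding scalar_prod_def by (subst sum_nonneg_eq_0_iff[symmetric]) auto
  then show "v = 0\<^sub>v n" using assms by (intro eq_vecI) auto
qed (use assms in simp)

lemma vnorm_power2: "(vnorm v)\<^sup>2 = v \<bullet> v"
  unfolding vnorm_def using scalar_prod_self_nonneg[of v] by simp

lemma mult_mat_vec_zero: "A \<in> carrier_mat n m \<Longrightarrow> A *\<^sub>v 0\<^sub>v m = (0\<^sub>v n :: 'a :: comm_ring vec)"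
  by (intro eq_vecI) auto

lemma invertible_mat_if_kernel_trivial:
  fixes A :: "real mat"
  assumes A: "A \<in> carrier_mat n n"
    and ker: "\<And>v. v \<in> carrier_vec n \<Longrightarrow> A *\<^sub>v v = 0\<^sub>v n \<Longrightarrow> v = 0\<^sub>v n"
  shows "invertible_mat A"
proof -
  have "det A \<noteq> 0" using det_0_iff_vec_prod_zero[OF A] ker by auto
  from det_non_zero_imp_unit[OF A this, of undefined]
  obtain B where "B \<in> carrier_mat n n" "A * B = 1\<^sub>m n" "B * A = 1\<^sub>m n"
    unfolding Units_def ring_mat_def by auto
  then show ?thesis using A unfolding invertible_mat_def inverts_mat_def by auto
qed

lemma minv_inverse:
  assumes "invertible_mat A" and A: "A \<in> carrier_mat n n"
  shows "minv A \<in> carrier_mat n n" "A * minv A = 1\<^sub>m n" "minv A * A = 1\<^sub>m n"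
proof -
  obtain B where AB: "A * B = 1\<^sub>m n" "B * A = 1\<^sub>m (dim_row B)"
    using assms unfolding invertible_mat_def inverts_mat_def by auto
  then have "B \<in> carrier_mat n n"
    using A by (metis carrier_matD carrier_matI index_mult_mat(2,3) index_one_mat(2,3))
  then have "\<exists>B. B \<in> carrier_mat (dim_row A) (dim_row A) \<and> inverts_mat A B \<and> inverts_mat B A"
    using A AB unfolding inverts_mat_def by auto
  from someI_ex[OF this] show "minv A \<in> carrier_mat n n" "A * minv A = 1\<^sub>m n" "minv A * A = 1\<^sub>m n"
    using A unfolding minv_def inverts_mat_def by auto
qed

text \<open>The reverse direction rests on \<open>x \<bullet> (A A\<^sup>T x) = \<parallel>A\<^sup>T x\<parallel>\<^sup>2\<close>.\<close>
lemma invertible_gram_iff: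
  fixes A :: "real mat"
  assumes A: "A \<in> carrier_mat n m"
  shows "invertible_mat (A * transpose_mat A)
    \<longleftrightarrow> (\<forall>x \<in> carrier_vec n. transpose_mat A *\<^sub>v x = 0\<^sub>v m \<longrightarrow> x = 0\<^sub>v n)"
proof -
  let ?K = "A * transpose_mat A"
  have K: "?K \<in> carrier_mat n n" using A by auto
  have Kx: "?K *\<^sub>v x = A *\<^sub>v (transpose_mat A *\<^sub>v x)" if "x \<in> carrier_vec n" for x
    using A that by simp
  show ?thesis
  proof
    assume inv: "invertible_mat ?K"
    show "\<forall>x \<in> carrier_vec n. transpose_mat A *\<^sub>v x = 0\<^sub>v m \<longrightarrow> x = 0\<^sub>v n"
    proof (intro ballI impI)
      fix x :: "real vec" assume x: "x \<in> carrier_vec n" and "transpose_mat A *\<^sub>v x = 0\<^sub>v m"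
      then have "?K *\<^sub>v x = 0\<^sub>v n" using Kx A by (simp add: mult_mat_vec_zero)
      then have "(minv ?K * ?K) *\<^sub>v x = 0\<^sub>v n"
        using minv_inverse(1)[OF inv K] K x by (simp add: mult_mat_vec_zero)
      then show "x = 0\<^sub>v n" using minv_inverse(3)[OF inv K] x by simp
    qed
  next
    assume inj: "\<forall>x \<in> carrier_vec n. transpose_mat A *\<^sub>v x = 0\<^sub>v m \<longrightarrow> x = 0\<^sub>v n"
    show "invertible_mat ?K"
    proof (rule invertible_mat_if_kernel_trivial[OF K])
      fix x :: "real vec" assume x: "x \<in> carrier_vec n" and "?K *\<^sub>v x = 0\<^sub>v n"
      then have "(transpose_mat A *\<^sub>v x) \<bullet> (transpose_mat A *\<^sub>v x) = 0"
        using transpose_vec_mult_scalar[OF A _ x, of "transpose_mat A *\<^sub>v x"] Kx A by simp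
      then show "x = 0\<^sub>v n"
        using inj x scalar_prod_self_eq_0_iff[of "transpose_mat A *\<^sub>v x" m] A by auto
    qed
  qed
qed

lemma drop_first_row_carrier: "A \<in> carrier_mat n m \<Longrightarrow> drop_first_row A \<in> carrier_mat (n - 1) m"
  unfolding drop_first_row_def by auto

lemma drop_first_carrier: "x \<in> carrier_vec n \<Longrightarrow> drop_first x \<in> carrier_vec (n - 1)"
  unfolding drop_first_def by auto

lemma vCons_drop_first: "x \<in> carrier_vec (Suc n) \<Longrightarrow> vCons (x $ 0) (drop_first x) = x"
  by (intro eq_vecI) (auto simp: drop_first_def vec_index_vCons)

lemma drop_first_mult_mat_vec:
  assumes "A \<in> carrier_mat n m" "y \<in> carrier_vec m"
  shows "drop_first_row A *\<^sub>v y = drop_first (A *\<^sub>v y)"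
  using assms by (intro eq_vecI) (auto simp: drop_first_row_def drop_first_def row_def scalar_prod_def)

lemma transpose_mult_vCons:
  fixes A :: "real mat"
  assumes A: "A \<in> carrier_mat (Suc n) m" and c: "c \<in> carrier_vec n"
  shows "transpose_mat A *\<^sub>v vCons s c = s \<cdot>\<^sub>v row A 0 + transpose_mat (drop_first_row A) *\<^sub>v c"
proof (rule eq_vecI)
  fix j assume "j < dim_vec (s \<cdot>\<^sub>v row A 0 + transpose_mat (drop_first_row A) *\<^sub>v c)"
  then have j: "j < m" using A by (simp add: drop_first_row_def)
  have "(transpose_mat A *\<^sub>v vCons s c) $ j = (\<Sum>i<Suc n. A $$ (i, j) * vCons s c $ i)"
    using A c j by (simp add: scalar_prod_def atLeast0LessThan)
  also have "\<dots> = A $$ (0, j) * s + (\<Sum>i<n. A $$ (Suc i, j) * c $ i)"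
    by (subst sum.lessThan_Suc_shift) simp
  also have "\<dots> = (s \<cdot>\<^sub>v row A 0 + transpose_mat (drop_first_row A) *\<^sub>v c) $ j"
    using A c j by (simp add: scalar_prod_def drop_first_row_def atLeast0LessThan mult.commute)
  finally show "(transpose_mat A *\<^sub>v vCons s c) $ j = (s \<cdot>\<^sub>v row A 0 + transpose_mat (drop_first_row A) *\<^sub>v c) $ j" .
qed (use A in \<open>simp add: drop_first_row_def\<close>)

lemma transpose_drop_first_row_kernel_trivial:
  fixes A :: "real mat"
  assumes A: "A \<in> carrier_mat (Suc n) m"
    and ker: "\<forall>x \<in> carrier_vec (Suc n). transpose_mat A *\<^sub>v x = 0\<^sub>v m \<longrightarrow> x = 0\<^sub>v (Suc n)"
  shows "\<forall>c \<in> carrier_vec n. transpose_mat (drop_first_row A) *\<^sub>v c = 0\<^sub>v m \<longrightarrow> c = 0\<^sub>v n"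
proof (intro ballI impI)
  fix c :: "real vec" assume c: "c \<in> carrier_vec n" and "transpose_mat (drop_first_row A) *\<^sub>v c = 0\<^sub>v m"
  then have "transpose_mat A *\<^sub>v vCons 0 c = 0\<^sub>v m"
    using transpose_mult_vCons[OF A c, of 0] A by auto
  then have "vCons 0 c = vCons 0 (0\<^sub>v n)" using ker[rule_format, of "vCons 0 c"] c by (simp add: zero_vec_Suc)
  then show "c = 0\<^sub>v n" by simp
qed

lemma first_row_notin_row_span_drop_first_row:
  fixes A :: "real mat"
  assumes A: "A \<in> carrier_mat (Suc n) m"
    and ker: "\<forall>x \<in> carrier_vec (Suc n). transpose_mat A *\<^sub>v x = 0\<^sub>v m \<longrightarrow> x = 0\<^sub>v (Suc n)"
  shows "row A 0 \<notin> row_span (drop_first_row A)"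
proof
  assume "row A 0 \<in> row_span (drop_first_row A)"
  then obtain c where c: "c \<in> carrier_vec n" and row: "row A 0 = transpose_mat (drop_first_row A) *\<^sub>v c"
    unfolding row_span_def using A by (auto simp: drop_first_row_def)
  have "transpose_mat A *\<^sub>v vCons (-1) c = 0\<^sub>v m"
    using transpose_mult_vCons[OF A c, of "-1"] A unfolding row[symmetric] by (intro eq_vecI) auto
  then have "vCons (-1) c = 0\<^sub>v (Suc n)" using ker[rule_format, of "vCons (-1) c"] c by simp
  then show False by (metis vec_index_vCons_0 zero_vec_Suc neg_equal_0_iff_equal zero_neq_one)
qed

lemma trained_eq:
  fixes A :: "real mat"
  assumes A: "A \<in> carrier_mat n p" and K: "invertible_mat (A * transpose_mat A)"
    and G: "G \<in> carrier_vec n" and theta0: "theta0 \<in> carrier_vec p"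
  shows "trained A G theta0
    = theta0 + transpose_mat A *\<^sub>v (minv (A * transpose_mat A) *\<^sub>v (G - A *\<^sub>v theta0))"
proof -
  have "minv (A * transpose_mat A) \<in> carrier_mat n n"
    using minv_inverse(1)[OF K] A by auto
  then show ?thesis unfolding trained_def pinv_def using A G theta0 by auto
qed

lemma mult_trained:
  fixes A :: "real mat"
  assumes A: "A \<in> carrier_mat n p" and K: "invertible_mat (A * transpose_mat A)"
    and G: "G \<in> carrier_vec n" and theta0: "theta0 \<in> carrier_vec p"
  shows "A *\<^sub>v trained A G theta0 = G"
proof -
  let ?K = "A * transpose_mat A" and ?r = "G - A *\<^sub>v theta0"
  have Kc: "?K \<in> carrier_mat n n" using A by auto
  have M: "minv ?K \<in> carrier_mat n n" "?K * minv ?K = 1\<^sub>m n"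
    using minv_inverse[OF K Kc] by auto
  have r: "?r \<in> carrier_vec n" using A G theta0 by auto
  have "A *\<^sub>v (transpose_mat A *\<^sub>v (minv ?K *\<^sub>v ?r)) = ?K *\<^sub>v (minv ?K *\<^sub>v ?r)"
    using A M(1) r by simp
  also have "\<dots> = (?K * minv ?K) *\<^sub>v ?r" by (rule assoc_mult_mat_vec[symmetric, OF Kc M(1) r])
  finally have KMr: "A *\<^sub>v (transpose_mat A *\<^sub>v (minv ?K *\<^sub>v ?r)) = ?r"
    using M(2) r by simp
  have "A *\<^sub>v trained A G theta0 = A *\<^sub>v theta0 + ?r"
    unfolding trained_eq[OF A K G theta0] using A M(1) r theta0 KMr
    by (simp add: mult_add_distrib_mat_vec)
  then show ?thesis using A G theta0 by (intro eq_vecI) auto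
qed

lemma trained_carrier:
  assumes "A \<in> carrier_mat n p" "theta0 \<in> carrier_vec p"
  shows "trained A G theta0 \<in> carrier_vec p"
  using assms unfolding trained_def pinv_def carrier_vec_def by auto

lemma orth_projector_image:
  assumes "is_orth_projector p P S" "v \<in> carrier_vec p"
  shows "P *\<^sub>v v \<in> S"
  using assms unfolding is_orth_projector_def by auto

lemma orth_projector_fixes:
  assumes P: "is_orth_projector p P S" and x: "x \<in> S"
  shows "P *\<^sub>v x = x"
proof -
  have Pc: "P \<in> carrier_mat p p" and PP: "P * P = P" using P unfolding is_orth_projector_def by auto
  obtain y where y: "y \<in> carrier_vec p" "x = P *\<^sub>v y" using P x unfolding is_orth_projector_def by auto
  have "P *\<^sub>v x = (P * P) *\<^sub>v y" using Pc y by simp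
  then show ?thesis using PP y by simp
qed

lemma orth_projector_row_span_kernel:
  fixes A :: "real mat"
  assumes P: "is_orth_projector p P (row_span A)" and A: "A \<in> carrier_mat m p"
    and v: "v \<in> carrier_vec p" and Av: "A *\<^sub>v v = 0\<^sub>v m"
  shows "P *\<^sub>v v = 0\<^sub>v p"
proof -
  have Pc: "P \<in> carrier_mat p p" and PP: "P * P = P" and PT: "transpose_mat P = P"
    using P unfolding is_orth_projector_def by auto
  define y where "y = P *\<^sub>v v"
  have y: "y \<in> carrier_vec p" unfolding y_def using Pc v by simp
  obtain c where c: "c \<in> carrier_vec m" "y = transpose_mat A *\<^sub>v c"
    using orth_projector_image[OF P v] A unfolding y_def row_span_def by auto
  have "transpose_mat P *\<^sub>v y = y"
    unfolding PT y_def by (rule orth_projector_fixes[OF P orth_projector_image[OF P v]])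
  then have "y \<bullet> y = y \<bullet> v" using transpose_vec_mult_scalar[OF Pc v y] unfolding y_def by simp
  also have "\<dots> = 0" using transpose_vec_mult_scalar[OF A v c(1)] c Av by simp
  finally show ?thesis using scalar_prod_self_eq_0_iff[OF y] unfolding y_def by simp
qed

lemma orth_projector_complement:
  fixes P :: "real mat"
  assumes P: "is_orth_projector p P S" and v: "v \<in> carrier_vec p"
  shows "(1\<^sub>m p - P) *\<^sub>v v = v - P *\<^sub>v v" "(1\<^sub>m p - P) *\<^sub>v v \<in> carrier_vec p"
    "P *\<^sub>v ((1\<^sub>m p - P) *\<^sub>v v) = 0\<^sub>v p"
proof -
  have Pc: "P \<in> carrier_mat p p" using P unfolding is_orth_projector_def by auto
  show eq: "(1\<^sub>m p - P) *\<^sub>v v = v - P *\<^sub>v v"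
    using minus_mult_distrib_mat_vec[of "1\<^sub>m p" p p P v] Pc v by simp
  then show "(1\<^sub>m p - P) *\<^sub>v v \<in> carrier_vec p" using Pc v by simp
  have "P *\<^sub>v (P *\<^sub>v v) = P *\<^sub>v v" by (rule orth_projector_fixes[OF P orth_projector_image[OF P v]])
  then show "P *\<^sub>v ((1\<^sub>m p - P) *\<^sub>v v) = 0\<^sub>v p"
    unfolding eq using mult_minus_distrib_mat_vec[OF Pc v, of "P *\<^sub>v v"] Pc v by auto
qed

lemma scalar_prod_orth_projector_complement:
  fixes P :: "real mat"
  assumes P: "is_orth_projector p P S" and v: "v \<in> carrier_vec p"
  shows "((1\<^sub>m p - P) *\<^sub>v v) \<bullet> ((1\<^sub>m p - P) *\<^sub>v v) = v \<bullet> ((1\<^sub>m p - P) *\<^sub>v v)"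
proof -
  let ?u = "(1\<^sub>m p - P) *\<^sub>v v"
  have Pc: "P \<in> carrier_mat p p" and PT: "transpose_mat P = P" using P unfolding is_orth_projector_def by auto
  have u: "?u \<in> carrier_vec p" using orth_projector_complement(2)[OF P v] .
  have "(P *\<^sub>v v) \<bullet> ?u = 0"
    using transpose_vec_mult_scalar[OF Pc u v] orth_projector_complement(3)[OF P v] PT v by simp
  then show ?thesis
    unfolding orth_projector_complement(1)[OF P v] using Pc v u by (simp add: minus_scalar_prod_distrib)
qed

lemma orth_projector_complement_nonzero:
  fixes P :: "real mat"
  assumes P: "is_orth_projector p P S" and v: "v \<in> carrier_vec p" and notin: "v \<notin> S"
  shows "(1\<^sub>m p - P) *\<^sub>v v \<noteq> 0\<^sub>v p"
proof
  assume "(1\<^sub>m p - P) *\<^sub>v v = 0\<^sub>v p"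
  then have "v = P *\<^sub>v v"
    unfolding orth_projector_complement(1)[OF P v] using P v unfolding is_orth_projector_def
    by (metis vec_eq_iff index_minus_vec index_zero_vec dim_mult_mat_vec carrier_matD(1) carrier_vecD eq_iff_diff_eq_0)
  then show False using orth_projector_image[OF P v] notin by simp
qed

lemma orth_projector_kernel_eq_complement:
  fixes P :: "real mat"
  assumes P: "is_orth_projector p P S" and v: "v \<in> carrier_vec p"
    and a: "a \<in> S" "a \<in> carrier_vec p" and kill: "P *\<^sub>v (s \<cdot>\<^sub>v v + a) = 0\<^sub>v p"
  shows "s \<cdot>\<^sub>v v + a = s \<cdot>\<^sub>v ((1\<^sub>m p - P) *\<^sub>v v)"
proof -
  have Pc: "P \<in> carrier_mat p p" using P unfolding is_orth_projector_def by auto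
  have "s \<cdot>\<^sub>v (P *\<^sub>v v) + a = 0\<^sub>v p"
    using kill mult_add_distrib_mat_vec[OF Pc, of "s \<cdot>\<^sub>v v" a] mult_mat_vec[OF Pc v]
      orth_projector_fixes[OF P a(1)] v a(2) by simp
  then have "a = - (s \<cdot>\<^sub>v (P *\<^sub>v v))"
    using Pc v a(2) by (metis vec_eq_iff index_add_vec index_uminus_vec index_zero_vec index_smult_vec
      dim_mult_mat_vec carrier_matD(1) carrier_vecD add_eq_0_iff)
  then show ?thesis
    unfolding orth_projector_complement(1)[OF P v] using Pc v by (intro eq_vecI) (auto simp: algebra_simps)
qed

lemma trained_drop_first_diff:
  fixes A :: "real mat"
  assumes A: "A \<in> carrier_mat (Suc n) p" and K: "invertible_mat (A * transpose_mat A)"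
    and G: "G \<in> carrier_vec (Suc n)" and theta0: "theta0 \<in> carrier_vec p"
    and P: "is_orth_projector p P (row_span (drop_first_row A))"
  shows "\<exists>s. trained A G theta0 - trained (drop_first_row A) (drop_first G) theta0
    = s \<cdot>\<^sub>v ((1\<^sub>m p - P) *\<^sub>v row A 0)"
proof -
  let ?A1 = "drop_first_row A"
  have A1: "?A1 \<in> carrier_mat n p" using drop_first_row_carrier[OF A] by simp
  have K1: "invertible_mat (?A1 * transpose_mat ?A1)"
    using K transpose_drop_first_row_kernel_trivial[OF A]
    unfolding invertible_gram_iff[OF A] invertible_gram_iff[OF A1] by blast
  have G1: "drop_first G \<in> carrier_vec n" using drop_first_carrier[OF G] by simp
  define c where "c = minv (A * transpose_mat A) *\<^sub>v (G - A *\<^sub>v theta0)"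
  define c1 where "c1 = minv (?A1 * transpose_mat ?A1) *\<^sub>v (drop_first G - ?A1 *\<^sub>v theta0)"
  have "minv (A * transpose_mat A) \<in> carrier_mat (Suc n) (Suc n)"
    using minv_inverse(1)[OF K] A by simp
  then have c: "c \<in> carrier_vec (Suc n)" unfolding c_def using A G theta0 by auto
  have "minv (?A1 * transpose_mat ?A1) \<in> carrier_mat n n"
    using minv_inverse(1)[OF K1] A1 by simp
  then have c1: "c1 \<in> carrier_vec n" unfolding c1_def using A1 G1 theta0 by auto
  have dc: "drop_first c \<in> carrier_vec n" using drop_first_carrier[OF c] by simp
  define D where "D = trained A G theta0 - trained ?A1 (drop_first G) theta0"
  have D: "D \<in> carrier_vec p"
    unfolding D_def using trained_carrier[OF A theta0] trained_carrier[OF A1 theta0] by auto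
  have "?A1 *\<^sub>v D = drop_first (A *\<^sub>v trained A G theta0) - ?A1 *\<^sub>v trained ?A1 (drop_first G) theta0"
    unfolding D_def drop_first_mult_mat_vec[OF A trained_carrier[OF A theta0], symmetric]
    using A1 trained_carrier[OF A theta0] trained_carrier[OF A1 theta0]
    by (simp add: mult_minus_distrib_mat_vec)
  also have "\<dots> = 0\<^sub>v n"
    unfolding mult_trained[OF A K G theta0] mult_trained[OF A1 K1 G1 theta0] using G1 by simp
  finally have PD: "P *\<^sub>v D = 0\<^sub>v p" using orth_projector_row_span_kernel[OF P A1 D] by simp
  define a where "a = transpose_mat ?A1 *\<^sub>v (drop_first c - c1)"
  have a: "a \<in> row_span ?A1" "a \<in> carrier_vec p"
    unfolding a_def row_span_def using A1 dc c1 by auto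
  have "transpose_mat A *\<^sub>v c = c $ 0 \<cdot>\<^sub>v row A 0 + transpose_mat ?A1 *\<^sub>v drop_first c"
    using transpose_mult_vCons[OF A dc, of "c $ 0"] unfolding vCons_drop_first[OF c] .
  moreover have "a = transpose_mat ?A1 *\<^sub>v drop_first c - transpose_mat ?A1 *\<^sub>v c1"
    unfolding a_def using A1 dc c1 by (simp add: mult_minus_distrib_mat_vec)
  ultimately have "D = c $ 0 \<cdot>\<^sub>v row A 0 + a"
    unfolding D_def trained_eq[OF A K G theta0] trained_eq[OF A1 K1 G1 theta0] c_def[symmetric] c1_def[symmetric]
    using A A1 c c1 dc theta0 by (intro eq_vecI) auto
  moreover have "row A 0 \<in> carrier_vec p" using A by (simp add: carrier_vecI)
  ultimately have "D = c $ 0 \<cdot>\<^sub>v ((1\<^sub>m p - P) *\<^sub>v row A 0)"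
    using orth_projector_kernel_eq_complement[OF P _ a] PD by simp
  then show ?thesis unfolding D_def by blast
qed

lemma stability_eq_scalar_prod:
  assumes "phi z \<in> carrier_vec p" "theta0 \<in> carrier_vec p"
  shows "stability N p phi zs G theta0 z = phi z \<bullet> (trained (feat_mat N p phi zs) G theta0
    - trained (drop_first_row (feat_mat N p phi zs)) (drop_first G) theta0)"
proof -
  have "feat_mat N p phi zs \<in> carrier_mat N p" unfolding feat_mat_def by simp
  then show ?thesis
    unfolding stability_def fmodel_def
    using assms trained_carrier drop_first_row_carrier by (metis scalar_prod_minus_distrib)
qed

theorem lemma1:
  fixes d p N :: nat and phi :: "real vec \<Rightarrow> real vec" and zs :: "nat \<Rightarrow> real vec"
    and G theta0 :: "real vec" and P :: "real mat"
  assumes N1: "N \<ge> 1"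
    and phi_dim: "\<And>z. z \<in> carrier_vec d \<Longrightarrow> phi z \<in> carrier_vec p"
    and zs_dim: "\<And>i. i < N \<Longrightarrow> zs i \<in> carrier_vec d"
    and G_dim: "G \<in> carrier_vec N"
    and theta0_dim: "theta0 \<in> carrier_vec p"
    and K_inv: "invertible_mat (feat_mat N p phi zs * transpose_mat (feat_mat N p phi zs))"
    and P_proj: "is_orth_projector p P (row_span (drop_first_row (feat_mat N p phi zs)))"
  shows "vnorm ((1\<^sub>m p - P) *\<^sub>v phi (zs 0)) \<noteq> 0
    \<and> (\<forall>z \<in> carrier_vec d.
         stability N p phi zs G theta0 z
         = (phi z \<bullet> ((1\<^sub>m p - P) *\<^sub>v phi (zs 0))) / (vnorm ((1\<^sub>m p - P) *\<^sub>v phi (zs 0)))\<^sup>2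
           * stability N p phi zs G theta0 (zs 0))"
proof -
  obtain n where N: "N = Suc n" using N1 by (cases N) auto
  define F where "F = feat_mat N p phi zs"
  define u where "u = (1\<^sub>m p - P) *\<^sub>v phi (zs 0)"
  have F: "F \<in> carrier_mat (Suc n) p" unfolding F_def feat_mat_def N by simp
  have z0: "zs 0 \<in> carrier_vec d" using zs_dim N1 by simp
  have f1: "phi (zs 0) \<in> carrier_vec p" using phi_dim[OF z0] .
  have row: "row F 0 = phi (zs 0)" using f1 unfolding F_def feat_mat_def N by (intro eq_vecI) auto
  have u: "u \<in> carrier_vec p" unfolding u_def using orth_projector_complement(2)[OF P_proj f1] .
  have "u \<noteq> 0\<^sub>v p"
    unfolding u_def using orth_projector_complement_nonzero[OF P_proj f1] row K_inv
      first_row_notin_row_span_drop_first_row[OF F] invertible_gram_iff[OF F] by (auto simp: F_def)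
  then have uu: "u \<bullet> u \<noteq> 0" using scalar_prod_self_eq_0_iff[OF u] by simp
  obtain s where s: "trained F G theta0 - trained (drop_first_row F) (drop_first G) theta0 = s \<cdot>\<^sub>v u"
    using trained_drop_first_diff[OF F _ _ theta0_dim, of G P] K_inv G_dim P_proj row
    unfolding u_def F_def N by auto
  have S: "stability N p phi zs G theta0 z = s * (phi z \<bullet> u)" if "phi z \<in> carrier_vec p" for z
    using stability_eq_scalar_prod[where phi = phi and z = z, OF that theta0_dim] s u that unfolding F_def by simp
  have "phi (zs 0) \<bullet> u = u \<bullet> u"
    unfolding u_def using scalar_prod_orth_projector_complement[OF P_proj f1] by simp
  then show ?thesis
    unfolding u_def[symmetric] vnorm_power2 using uu S[OF f1] S phi_dim by (auto simp: vnorm_def)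
qed

end
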